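(* For a skew brace $A$, the spaces $\mathrm{Spec}\,A$ and $\mathrm{Spec}(A/\mathrm{Nil}\,A)$ (with their spectral topologies) are homeomorphic.
   Context: A (left) skew brace is a triple $(A,+,\circ)$ where $(A,+)$ and $(A,\circ)$ are groups such that $a\circ(b+c)=a\circ b-a+a\circ c$ for all $a,b,c$; common identity $e$. Put $\lambda_a(b)=-a+a\circ b$ and $a*b=-a+a\circ b-b$. An ideal is a normal subgroup $I$ of both $(A,+)$ and $(A,\circ)$ with $\lambda_a(I)\subseteq I$ for all $a$; for an ideal $I$, $A/I=\{a+I\}$ is a skew brace with $(a+I)+(b+I)=(a+b)+I$, $(a+I)\circ(b+I)=(a\circ b)+I$. A prime ideal is a proper ideal $P$ such that for any subsets $X,Y$ of $A$, $\{x*y\mid x\in X,y\in Y\}\subseteq P$ implies $X\subseteq P$ or $Y\subseteq P$; $\mathrm{Spec}\,A$ is the set of prime ideals, with the spectral topology whose closed sets are $H(I)=\{P\in\mathrm{Spec}\,A\mid I\subseteq P\}$, $I$ an ideal. $\mathrm{Nil}\,A$ is the intersection of all prime ideals of $A$. *)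

theory Defs
  imports "HOL-Analysis.Abstract_Topology" "HOL-Algebra.Coset"
begin

record 'a brace =
  bcarrier :: "'a set"
  badd :: "'a \<Rightarrow> 'a \<Rightarrow> 'a"
  bcirc :: "'a \<Rightarrow> 'a \<Rightarrow> 'a"
  bzero :: 'a

definition add_group :: "'a brace \<Rightarrow> 'a monoid" where
  "add_group A = \<lparr>carrier = bcarrier A, mult = badd A, one = bzero A\<rparr>"

definition circ_group :: "'a brace \<Rightarrow> 'a monoid" where
  "circ_group A = \<lparr>carrier = bcarrier A, mult = bcirc A, one = bzero A\<rparr>"

definition bneg :: "'a brace \<Rightarrow> 'a \<Rightarrow> 'a" where
  "bneg A a = inv\<^bsub>add_group A\<^esub> a"

definition skew_brace :: "'a brace \<Rightarrow> bool" where
  "skew_brace A \<longleftrightarrow> group (add_group A) \<and> group (circ_group A) \<and>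
     (\<forall>a\<in>bcarrier A. \<forall>b\<in>bcarrier A. \<forall>c\<in>bcarrier A.
        bcirc A a (badd A b c) = badd A (badd A (bcirc A a b) (bneg A a)) (bcirc A a c))"

definition blambda :: "'a brace \<Rightarrow> 'a \<Rightarrow> 'a \<Rightarrow> 'a" where
  "blambda A a b = badd A (bneg A a) (bcirc A a b)"

definition bstar :: "'a brace \<Rightarrow> 'a \<Rightarrow> 'a \<Rightarrow> 'a" where
  "bstar A a b = badd A (badd A (bneg A a) (bcirc A a b)) (bneg A b)"

definition brace_ideal :: "'a brace \<Rightarrow> 'a set \<Rightarrow> bool" where
  "brace_ideal A I \<longleftrightarrow> normal I (add_group A) \<and> normal I (circ_group A) \<and>
     (\<forall>a\<in>bcarrier A. blambda A a ` I \<subseteq> I)"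

definition prime_ideal :: "'a brace \<Rightarrow> 'a set \<Rightarrow> bool" where
  "prime_ideal A P \<longleftrightarrow> brace_ideal A P \<and> P \<noteq> bcarrier A \<and>
     (\<forall>X Y. X \<subseteq> bcarrier A \<longrightarrow> Y \<subseteq> bcarrier A \<longrightarrow>
        {bstar A x y | x y. x \<in> X \<and> y \<in> Y} \<subseteq> P \<longrightarrow> X \<subseteq> P \<or> Y \<subseteq> P)"

definition Spec :: "'a brace \<Rightarrow> 'a set set" where
  "Spec A = {P. prime_ideal A P}"

definition Hset :: "'a brace \<Rightarrow> 'a set \<Rightarrow> 'a set set" where
  "Hset A I = {P \<in> Spec A. I \<subseteq> P}"

definition spec_top :: "'a brace \<Rightarrow> 'a set topology" where
  "spec_top A = topology (\<lambda>U. U \<subseteq> Spec A \<and> (\<exists>I. brace_ideal A I \<and> Spec A - U = Hset A I))"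

definition Nil_brace :: "'a brace \<Rightarrow> 'a set" where
  "Nil_brace A = bcarrier A \<inter> \<Inter> (Spec A)"

definition bcoset :: "'a brace \<Rightarrow> 'a \<Rightarrow> 'a set \<Rightarrow> 'a set" where
  "bcoset A a I = (\<lambda>i. badd A a i) ` I"

text \<open>Quotient skew brace A/I: (a+I)+(b+I) = (a+b)+I, (a+I)o(b+I) = (a o b)+I.\<close>
definition quotient_brace :: "'a brace \<Rightarrow> 'a set \<Rightarrow> 'a set brace" where
  "quotient_brace A I = \<lparr>
     bcarrier = {bcoset A a I | a. a \<in> bcarrier A},
     badd = (\<lambda>X Y. \<Union>{bcoset A (badd A a b) I | a b. a \<in> bcarrier A \<and> b \<in> bcarrier A
                         \<and> X = bcoset A a I \<and> Y = bcoset A b I}),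
     bcirc = (\<lambda>X Y. \<Union>{bcoset A (bcirc A a b) I | a b. a \<in> bcarrier A \<and> b \<in> bcarrier A
                         \<and> X = bcoset A a I \<and> Y = bcoset A b I}),
     bzero = bcoset A (bzero A) I \<rparr>"

end

theory Submission
  imports Defs
begin

text \<open>
  Let f : A \<rightarrow> B be a surjective homomorphism of skew braces whose kernel lies in Nil A,
  i.e. in every prime ideal of A. As in ring theory, f\<inverse>(f P) = P for every ideal P
  containing the kernel, and P \<mapsto> f P, Q \<mapsto> f\<inverse> Q are mutually inverse bijections
  between the prime ideals of A and those of B. Both maps are continuous, because the
  preimage of H(J) under the first is H(f\<inverse> J) and the preimage of H(I) under the
  second is H(f I). The theorem is the case of the canonical projection A \<rightarrow> A/Nil A,
  whose kernel is Nil A.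
\<close>

lemma add_group_simps [simp]:
  "carrier (add_group A) = bcarrier A" "mult (add_group A) = badd A" "one (add_group A) = bzero A"
  by (simp_all add: add_group_def)

lemma circ_group_simps [simp]:
  "carrier (circ_group A) = bcarrier A" "mult (circ_group A) = bcirc A" "one (circ_group A) = bzero A"
  by (simp_all add: circ_group_def)

lemma inv_add_group_eq_bneg [simp]: "inv\<^bsub>add_group A\<^esub> a = bneg A a"
  by (simp add: bneg_def)

lemma Spec_imp_brace_ideal: "P \<in> Spec A \<Longrightarrow> brace_ideal A P"
  unfolding Spec_def prime_ideal_def by blast

lemma Hset_subset_Spec: "Hset A I \<subseteq> Spec A"
  unfolding Hset_def by blast

lemma prime_idealD:
  assumes "prime_ideal A P" and "X \<subseteq> bcarrier A" and "Y \<subseteq> bcarrier A"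
    and "\<And>x y. x \<in> X \<Longrightarrow> y \<in> Y \<Longrightarrow> bstar A x y \<in> P"
  shows "X \<subseteq> P \<or> Y \<subseteq> P"
proof -
  have "{bstar A x y | x y. x \<in> X \<and> y \<in> Y} \<subseteq> P" using assms(4) by blast
  then show ?thesis using assms(1-3) unfolding prime_ideal_def by blast
qed

lemma prime_idealI:
  assumes "brace_ideal A P" and "P \<noteq> bcarrier A"
    and "\<And>X Y. X \<subseteq> bcarrier A \<Longrightarrow> Y \<subseteq> bcarrier A \<Longrightarrow>
       (\<And>x y. x \<in> X \<Longrightarrow> y \<in> Y \<Longrightarrow> bstar A x y \<in> P) \<Longrightarrow> X \<subseteq> P \<or> Y \<subseteq> P"
  shows "prime_ideal A P"
  unfolding prime_ideal_def
proof (intro conjI allI impI)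
  fix X Y
  assume "X \<subseteq> bcarrier A" "Y \<subseteq> bcarrier A" "{bstar A x y | x y. x \<in> X \<and> y \<in> Y} \<subseteq> P"
  then show "X \<subseteq> P \<or> Y \<subseteq> P" using assms(3) by blast
qed (use assms in auto)


section \<open>Arithmetic and ideals of a skew brace\<close>

locale skew_brace_loc =
  fixes A :: "'a brace"
  assumes is_skew_brace: "skew_brace A"
begin

sublocale Add: group "add_group A"
  using is_skew_brace by (simp add: skew_brace_def)

sublocale Circ: group "circ_group A"
  using is_skew_brace by (simp add: skew_brace_def)

abbreviation "carr \<equiv> bcarrier A"
abbreviation add_op (infixl "\<oplus>" 65) where "a \<oplus> b \<equiv> badd A a b"
abbreviation circ_op (infixl "\<cdot>" 70) where "a \<cdot> b \<equiv> bcirc A a b"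
abbreviation "neg a \<equiv> bneg A a"
abbreviation "e \<equiv> bzero A"
abbreviation "cinv a \<equiv> inv\<^bsub>circ_group A\<^esub> a"
abbreviation "lam \<equiv> blambda A"

lemma add_closed [simp]: "a \<in> carr \<Longrightarrow> b \<in> carr \<Longrightarrow> a \<oplus> b \<in> carr"
  using Add.m_closed by simp

lemma circ_closed [simp]: "a \<in> carr \<Longrightarrow> b \<in> carr \<Longrightarrow> a \<cdot> b \<in> carr"
  using Circ.m_closed by simp

lemma e_closed [simp]: "e \<in> carr"
  using Add.one_closed by simp

lemma neg_closed [simp]: "a \<in> carr \<Longrightarrow> neg a \<in> carr"
  using Add.inv_closed by simp

lemma cinv_closed [simp]: "a \<in> carr \<Longrightarrow> cinv a \<in> carr"
  using Circ.inv_closed by simp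

lemma add_assoc [simp]: "a \<in> carr \<Longrightarrow> b \<in> carr \<Longrightarrow> c \<in> carr \<Longrightarrow> a \<oplus> b \<oplus> c = a \<oplus> (b \<oplus> c)"
  using Add.m_assoc by simp

lemma circ_assoc [simp]: "a \<in> carr \<Longrightarrow> b \<in> carr \<Longrightarrow> c \<in> carr \<Longrightarrow> a \<cdot> b \<cdot> c = a \<cdot> (b \<cdot> c)"
  using Circ.m_assoc by simp

lemma add_e [simp]: "a \<in> carr \<Longrightarrow> a \<oplus> e = a" "a \<in> carr \<Longrightarrow> e \<oplus> a = a"
  using Add.r_one Add.l_one by simp_all

lemma circ_e [simp]: "a \<in> carr \<Longrightarrow> a \<cdot> e = a" "a \<in> carr \<Longrightarrow> e \<cdot> a = a"
  using Circ.r_one Circ.l_one by simp_all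

lemma add_neg [simp]: "a \<in> carr \<Longrightarrow> neg a \<oplus> a = e" "a \<in> carr \<Longrightarrow> a \<oplus> neg a = e"
  using Add.l_inv Add.r_inv by simp_all

lemma add_neg_cancel [simp]:
  "a \<in> carr \<Longrightarrow> b \<in> carr \<Longrightarrow> neg a \<oplus> (a \<oplus> b) = b"
  "a \<in> carr \<Longrightarrow> b \<in> carr \<Longrightarrow> a \<oplus> (neg a \<oplus> b) = b"
  by (simp_all flip: add_assoc)

lemma circ_cinv [simp]: "a \<in> carr \<Longrightarrow> cinv a \<cdot> a = e" "a \<in> carr \<Longrightarrow> a \<cdot> cinv a = e"
  using Circ.l_inv Circ.r_inv by simp_all

lemma circ_cinv_cancel [simp]:
  "a \<in> carr \<Longrightarrow> b \<in> carr \<Longrightarrow> cinv a \<cdot> (a \<cdot> b) = b"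
  "a \<in> carr \<Longrightarrow> b \<in> carr \<Longrightarrow> a \<cdot> (cinv a \<cdot> b) = b"
  by (simp_all flip: circ_assoc)

lemma neg_neg [simp]: "a \<in> carr \<Longrightarrow> neg (neg a) = a"
  using Add.inv_inv by simp

lemma neg_e [simp]: "neg e = e"
  using Add.inv_one by simp

lemma neg_add [simp]: "a \<in> carr \<Longrightarrow> b \<in> carr \<Longrightarrow> neg (a \<oplus> b) = neg b \<oplus> neg a"
  using Add.inv_mult_group by simp

lemma cinv_cinv [simp]: "a \<in> carr \<Longrightarrow> cinv (cinv a) = a"
  using Circ.inv_inv by simp

lemma cinv_circ [simp]: "a \<in> carr \<Longrightarrow> b \<in> carr \<Longrightarrow> cinv (a \<cdot> b) = cinv b \<cdot> cinv a"
  using Circ.inv_mult_group by simp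

lemma circ_add_distrib: "a \<in> carr \<Longrightarrow> b \<in> carr \<Longrightarrow> c \<in> carr \<Longrightarrow> a \<cdot> (b \<oplus> c) = a \<cdot> b \<oplus> neg a \<oplus> a \<cdot> c"
  using is_skew_brace unfolding skew_brace_def by blast

lemma lam_closed [simp]: "a \<in> carr \<Longrightarrow> b \<in> carr \<Longrightarrow> lam a b \<in> carr"
  unfolding blambda_def by simp

lemma bstar_closed [simp]: "a \<in> carr \<Longrightarrow> b \<in> carr \<Longrightarrow> bstar A a b \<in> carr"
  unfolding bstar_def by simp

lemma circ_eq_add_lam: "a \<in> carr \<Longrightarrow> b \<in> carr \<Longrightarrow> a \<cdot> b = a \<oplus> lam a b"
  unfolding blambda_def by simp

lemma lam_add: "a \<in> carr \<Longrightarrow> b \<in> carr \<Longrightarrow> c \<in> carr \<Longrightarrow> lam a (b \<oplus> c) = lam a b \<oplus> lam a c"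
  unfolding blambda_def by (simp add: circ_add_distrib)

lemma lam_e_left [simp]: "b \<in> carr \<Longrightarrow> lam e b = b"
  unfolding blambda_def by simp

lemma lam_e_right [simp]: "a \<in> carr \<Longrightarrow> lam a e = e"
  unfolding blambda_def by simp

lemma lam_neg:
  assumes "a \<in> carr" "b \<in> carr"
  shows "lam a (neg b) = neg (lam a b)"
proof -
  have "lam a (neg b) \<oplus> lam a b = e"
    using assms lam_add[of a "neg b" b] by simp
  then show ?thesis
    using assms Add.inv_equality[of "lam a (neg b)" "lam a b"] by simp
qed

lemma lam_lam:
  assumes "a \<in> carr" "b \<in> carr" "c \<in> carr"
  shows "lam a (lam b c) = lam (a \<cdot> b) c"
proof -
  have "lam a (lam b c) = lam a (neg b) \<oplus> lam a (b \<cdot> c)"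
    using assms by (simp add: blambda_def[of A b] lam_add)
  also have "\<dots> = neg (lam a b) \<oplus> lam a (b \<cdot> c)"
    using assms by (simp add: lam_neg)
  also have "\<dots> = lam (a \<cdot> b) c"
    using assms by (simp add: blambda_def)
  finally show ?thesis .
qed

lemma lam_cinv_lam: "a \<in> carr \<Longrightarrow> b \<in> carr \<Longrightarrow> lam (cinv a) (lam a b) = b"
  by (simp add: lam_lam)

lemma brace_idealD:
  assumes "brace_ideal A I"
  shows ideal_subset: "I \<subseteq> carr"
    and ideal_e: "e \<in> I"
    and ideal_add: "\<And>a b. a \<in> I \<Longrightarrow> b \<in> I \<Longrightarrow> a \<oplus> b \<in> I"
    and ideal_neg: "\<And>a. a \<in> I \<Longrightarrow> neg a \<in> I"
    and ideal_add_conj: "\<And>x a. x \<in> carr \<Longrightarrow> a \<in> I \<Longrightarrow> x \<oplus> (a \<oplus> neg x) \<in> I"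
    and ideal_circ: "\<And>a b. a \<in> I \<Longrightarrow> b \<in> I \<Longrightarrow> a \<cdot> b \<in> I"
    and ideal_cinv: "\<And>a. a \<in> I \<Longrightarrow> cinv a \<in> I"
    and ideal_circ_conj: "\<And>x a. x \<in> carr \<Longrightarrow> a \<in> I \<Longrightarrow> x \<cdot> (a \<cdot> cinv x) \<in> I"
    and ideal_lam: "\<And>x a. x \<in> carr \<Longrightarrow> a \<in> I \<Longrightarrow> lam x a \<in> I"
proof -
  have add: "I \<lhd> add_group A" and circ: "I \<lhd> circ_group A"
    and lam: "\<forall>x\<in>carr. lam x ` I \<subseteq> I"
    using assms unfolding brace_ideal_def by auto
  interpret I_add: normal I "add_group A" by (rule add)
  interpret I_circ: normal I "circ_group A" by (rule circ)
  show "I \<subseteq> carr" using I_add.subset by simp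
  show "e \<in> I" using I_add.one_closed by simp
  show "\<And>a b. a \<in> I \<Longrightarrow> b \<in> I \<Longrightarrow> a \<oplus> b \<in> I" using I_add.m_closed by simp
  show "\<And>a. a \<in> I \<Longrightarrow> neg a \<in> I" using I_add.m_inv_closed by simp
  show "\<And>x a. x \<in> carr \<Longrightarrow> a \<in> I \<Longrightarrow> x \<oplus> (a \<oplus> neg x) \<in> I"
    using I_add.inv_op_closed2 I_add.subset by (auto simp: subset_iff)
  show "\<And>a b. a \<in> I \<Longrightarrow> b \<in> I \<Longrightarrow> a \<cdot> b \<in> I" using I_circ.m_closed by simp
  show "\<And>a. a \<in> I \<Longrightarrow> cinv a \<in> I" using I_circ.m_inv_closed by simp
  show "\<And>x a. x \<in> carr \<Longrightarrow> a \<in> I \<Longrightarrow> x \<cdot> (a \<cdot> cinv x) \<in> I"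
    using I_circ.inv_op_closed2 I_add.subset by (auto simp: subset_iff)
  show "\<And>x a. x \<in> carr \<Longrightarrow> a \<in> I \<Longrightarrow> lam x a \<in> I" using lam by blast
qed

lemma brace_idealI:
  assumes "I \<subseteq> carr" "e \<in> I"
    "\<And>a b. a \<in> I \<Longrightarrow> b \<in> I \<Longrightarrow> a \<oplus> b \<in> I"
    "\<And>a. a \<in> I \<Longrightarrow> neg a \<in> I"
    "\<And>x a. x \<in> carr \<Longrightarrow> a \<in> I \<Longrightarrow> x \<oplus> (a \<oplus> neg x) \<in> I"
    "\<And>a b. a \<in> I \<Longrightarrow> b \<in> I \<Longrightarrow> a \<cdot> b \<in> I"
    "\<And>a. a \<in> I \<Longrightarrow> cinv a \<in> I"
    "\<And>x a. x \<in> carr \<Longrightarrow> a \<in> I \<Longrightarrow> x \<cdot> (a \<cdot> cinv x) \<in> I"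
    "\<And>x a. x \<in> carr \<Longrightarrow> a \<in> I \<Longrightarrow> lam x a \<in> I"
  shows "brace_ideal A I"
proof -
  have "subgroup I (add_group A)" by (rule Add.subgroupI) (use assms in auto)
  then have "I \<lhd> add_group A" by (rule Add.normal_invI) (use assms in \<open>auto simp: subset_iff\<close>)
  moreover have "subgroup I (circ_group A)" by (rule Circ.subgroupI) (use assms in auto)
  then have "I \<lhd> circ_group A" by (rule Circ.normal_invI) (use assms in \<open>auto simp: subset_iff\<close>)
  ultimately show ?thesis unfolding brace_ideal_def using assms(9) by blast
qed

lemma brace_ideal_Inter: "(\<And>I. I \<in> \<I> \<Longrightarrow> brace_ideal A I) \<Longrightarrow> brace_ideal A (carr \<inter> \<Inter>\<I>)"
  by (rule brace_idealI)
    (auto intro: ideal_e ideal_add ideal_neg ideal_add_conj ideal_circ ideal_cinv ideal_circ_conj ideal_lam)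

lemma brace_ideal_Int:
  assumes "brace_ideal A I" "brace_ideal A J"
  shows "brace_ideal A (I \<inter> J)"
proof -
  have "brace_ideal A (carr \<inter> \<Inter>{I, J})" using assms by (intro brace_ideal_Inter) auto
  moreover have "carr \<inter> \<Inter>{I, J} = I \<inter> J" using ideal_subset[OF assms(1)] by auto
  ultimately show ?thesis by simp
qed

lemma brace_ideal_carrier: "brace_ideal A carr"
  by (rule brace_idealI) auto

lemma brace_ideal_Nil: "brace_ideal A (Nil_brace A)"
  unfolding Nil_brace_def by (rule brace_ideal_Inter) (rule Spec_imp_brace_ideal)

lemma bstar_mem_ideals:
  assumes I: "brace_ideal A I" and J: "brace_ideal A J" and a: "a \<in> I" and b: "b \<in> J"
  shows "bstar A a b \<in> I \<inter> J"
proof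
  have a_carr: "a \<in> carr" and b_carr: "b \<in> carr" using ideal_subset I J a b by auto
  show "bstar A a b \<in> J"
    unfolding bstar_def using ideal_lam[OF J a_carr b] ideal_neg[OF J b] ideal_add[OF J]
    by (simp add: blambda_def)
  define i where "i = cinv b \<cdot> (a \<cdot> b)"
  have i: "i \<in> I" unfolding i_def using ideal_circ_conj[OF I cinv_closed[OF b_carr] a] b_carr by simp
  then have i_carr: "i \<in> carr" using ideal_subset[OF I] by auto
  have "a \<cdot> b = b \<oplus> lam b i"
    unfolding i_def using a_carr b_carr by (simp flip: circ_eq_add_lam)
  then have "bstar A a b = neg a \<oplus> (b \<oplus> lam b i \<oplus> neg b)"
    unfolding bstar_def using a_carr b_carr i_carr by simp
  moreover have "b \<oplus> (lam b i \<oplus> neg b) \<in> I"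
    using ideal_add_conj[OF I b_carr ideal_lam[OF I b_carr i]] .
  ultimately show "bstar A a b \<in> I"
    using ideal_add[OF I ideal_neg[OF I a]] a_carr b_carr i_carr by simp
qed


section \<open>The spectral topology\<close>

lemma Hset_Un_Hset:
  assumes I: "brace_ideal A I" and J: "brace_ideal A J"
  shows "Hset A I \<union> Hset A J = Hset A (I \<inter> J)"
proof
  show "Hset A I \<union> Hset A J \<subseteq> Hset A (I \<inter> J)" unfolding Hset_def by blast
  show "Hset A (I \<inter> J) \<subseteq> Hset A I \<union> Hset A J"
  proof
    fix P assume P: "P \<in> Hset A (I \<inter> J)"
    then have "I \<subseteq> P \<or> J \<subseteq> P"
      using ideal_subset[OF I] ideal_subset[OF J] bstar_mem_ideals[OF I J]
      by (intro prime_idealD[where A = A]) (auto simp: Hset_def Spec_def)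
    then show "P \<in> Hset A I \<union> Hset A J" using P unfolding Hset_def by auto
  qed
qed

text \<open>A closed set H(I) is also H of the intersection of its points, since that
  intersection contains I; this makes closed sets stable under arbitrary intersections.\<close>

lemma Inter_Hset:
  assumes "\<And>C. C \<in> \<C> \<Longrightarrow> \<exists>I. brace_ideal A I \<and> C = Hset A I"
  shows "Spec A \<inter> \<Inter>\<C> = Hset A (carr \<inter> \<Inter>(Spec A \<inter> \<Inter>\<C>))"
proof
  show "Spec A \<inter> \<Inter>\<C> \<subseteq> Hset A (carr \<inter> \<Inter>(Spec A \<inter> \<Inter>\<C>))"
    unfolding Hset_def by blast
  show "Hset A (carr \<inter> \<Inter>(Spec A \<inter> \<Inter>\<C>)) \<subseteq> Spec A \<inter> \<Inter>\<C>"
  proof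
    fix P assume P: "P \<in> Hset A (carr \<inter> \<Inter>(Spec A \<inter> \<Inter>\<C>))"
    have "P \<in> C" if C: "C \<in> \<C>" for C
    proof -
      obtain I where I: "brace_ideal A I" "C = Hset A I" using assms C by blast
      have "I \<subseteq> carr \<inter> \<Inter>(Spec A \<inter> \<Inter>\<C>)"
        using ideal_subset[OF I(1)] I(2) C unfolding Hset_def by blast
      then show "P \<in> C" using P I(2) unfolding Hset_def by blast
    qed
    then show "P \<in> Spec A \<inter> \<Inter>\<C>" using P Hset_subset_Spec by blast
  qed
qed

lemma istopology_spec:
  "istopology (\<lambda>U. U \<subseteq> Spec A \<and> (\<exists>I. brace_ideal A I \<and> Spec A - U = Hset A I))"
  unfolding istopology_def
proof (rule conjI; intro allI impI)
  fix S T
  assume "S \<subseteq> Spec A \<and> (\<exists>I. brace_ideal A I \<and> Spec A - S = Hset A I)"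
    and "T \<subseteq> Spec A \<and> (\<exists>I. brace_ideal A I \<and> Spec A - T = Hset A I)"
  then obtain I J where S: "S \<subseteq> Spec A" "Spec A - S = Hset A I" and I: "brace_ideal A I"
    and T: "T \<subseteq> Spec A" "Spec A - T = Hset A J" and J: "brace_ideal A J"
    by blast
  have "Spec A - (S \<inter> T) = Hset A (I \<inter> J)"
    using S(2) T(2) Hset_Un_Hset[OF I J] by blast
  then show "S \<inter> T \<subseteq> Spec A \<and> (\<exists>I. brace_ideal A I \<and> Spec A - (S \<inter> T) = Hset A I)"
    using S(1) brace_ideal_Int[OF I J] by blast
next
  fix \<U>
  assume \<U>: "\<forall>U\<in>\<U>. U \<subseteq> Spec A \<and> (\<exists>I. brace_ideal A I \<and> Spec A - U = Hset A I)"
  let ?\<C> = "(\<lambda>U. Spec A - U) ` \<U>"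
  let ?I = "carr \<inter> \<Inter>(Spec A \<inter> \<Inter>?\<C>)"
  have "Spec A - \<Union>\<U> = Spec A \<inter> \<Inter>?\<C>" by blast
  also have "\<dots> = Hset A ?I"
    by (rule Inter_Hset) (use \<U> in blast)
  finally have "Spec A - \<Union>\<U> = Hset A ?I" .
  moreover have "brace_ideal A ?I"
    by (rule brace_ideal_Inter) (auto intro: Spec_imp_brace_ideal)
  moreover have "\<Union>\<U> \<subseteq> Spec A" using \<U> by blast
  ultimately show "\<Union>\<U> \<subseteq> Spec A \<and> (\<exists>I. brace_ideal A I \<and> Spec A - \<Union>\<U> = Hset A I)"
    by blast
qed

lemma openin_spec_top:
  "openin (spec_top A) U \<longleftrightarrow> U \<subseteq> Spec A \<and> (\<exists>I. brace_ideal A I \<and> Spec A - U = Hset A I)"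
  unfolding spec_top_def using istopology_spec by simp

lemma topspace_spec_top: "topspace (spec_top A) = Spec A"
proof -
  have "Hset A carr = {}"
    unfolding Hset_def Spec_def prime_ideal_def using ideal_subset by blast
  then have "openin (spec_top A) (Spec A)"
    unfolding openin_spec_top using brace_ideal_carrier by auto
  then show ?thesis unfolding topspace_def openin_spec_top by blast
qed

lemma closedin_spec_top: "closedin (spec_top A) C \<longleftrightarrow> (\<exists>I. brace_ideal A I \<and> C = Hset A I)"
proof
  assume "closedin (spec_top A) C"
  then have "C \<subseteq> Spec A" "\<exists>I. brace_ideal A I \<and> Spec A - (Spec A - C) = Hset A I"
    unfolding closedin_def topspace_spec_top openin_spec_top by auto
  then show "\<exists>I. brace_ideal A I \<and> C = Hset A I" by (metis double_diff order_refl)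
next
  assume "\<exists>I. brace_ideal A I \<and> C = Hset A I"
  moreover have "Spec A - (Spec A - Hset A I) = Hset A I" for I
    using Hset_subset_Spec by blast
  ultimately show "closedin (spec_top A) C"
    unfolding closedin_def topspace_spec_top openin_spec_top using Hset_subset_Spec by auto
qed

end


section \<open>Surjective homomorphisms\<close>

lemma (in group_hom) normal_vimage:
  assumes "N \<lhd> H"
  shows "carrier G \<inter> h -` N \<lhd> G"
proof -
  interpret N: normal N H by fact
  have "subgroup (carrier G \<inter> h -` N) G"
    by (rule G.subgroupI) (auto simp: N.m_inv_closed N.m_closed)
  then show ?thesis
    by (rule G.normal_invI) (auto simp: N.inv_op_closed2)
qed


lemma skew_brace_image:
  assumes A: "skew_brace A" and car: "bcarrier B = f ` bcarrier A"
    and add: "\<And>x y. x \<in> bcarrier A \<Longrightarrow> y \<in> bcarrier A \<Longrightarrow> f (badd A x y) = badd B (f x) (f y)"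
    and circ: "\<And>x y. x \<in> bcarrier A \<Longrightarrow> y \<in> bcarrier A \<Longrightarrow> f (bcirc A x y) = bcirc B (f x) (f y)"
    and zero: "bzero B = f (bzero A)"
  shows "skew_brace B"
proof -
  interpret skew_brace_loc A by (rule skew_brace_loc.intro) (rule A)
  have add_hom: "f \<in> hom (add_group A) (add_group B)" using car add by (auto simp: hom_def)
  have circ_hom: "f \<in> hom (circ_group A) (circ_group B)" using car circ by (auto simp: hom_def)
  have add_group: "group (add_group B)"
    using Add.hom_imp_img_group[OF add_hom] car zero by (simp add: add_group_def)
  have circ_group: "group (circ_group B)"
    using Circ.hom_imp_img_group[OF circ_hom] car zero by (simp add: circ_group_def)
  have neg: "bneg B (f x) = f (neg x)" if "x \<in> carr" for x
    using group_hom.hom_inv[of "add_group A" "add_group B" f] add_group add_hom that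
    by (simp add: group_hom_def group_hom_axioms_def Add.is_group)
  have "bcirc B a (badd B b c) = badd B (badd B (bcirc B a b) (bneg B a)) (bcirc B a c)"
    if "a \<in> bcarrier B" "b \<in> bcarrier B" "c \<in> bcarrier B" for a b c
    using that car by (auto simp flip: add circ simp: neg circ_add_distrib)
  then show ?thesis unfolding skew_brace_def using add_group circ_group by blast
qed

locale surj_brace_hom = A: skew_brace_loc A + B: skew_brace_loc B
  for A :: "'a brace" and B :: "'b brace" +
  fixes f :: "'a \<Rightarrow> 'b"
  assumes surj: "f ` bcarrier A = bcarrier B"
    and hom_add: "\<And>x y. x \<in> bcarrier A \<Longrightarrow> y \<in> bcarrier A \<Longrightarrow> f (badd A x y) = badd B (f x) (f y)"
    and hom_circ: "\<And>x y. x \<in> bcarrier A \<Longrightarrow> y \<in> bcarrier A \<Longrightarrow> f (bcirc A x y) = bcirc B (f x) (f y)"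
begin

abbreviation "ker \<equiv> kernel (add_group A) (add_group B) f"

lemma hom_closed [simp]: "x \<in> bcarrier A \<Longrightarrow> f x \<in> bcarrier B"
  using surj by auto

lemma group_hom_add: "group_hom (add_group A) (add_group B) f"
  unfolding group_hom_def group_hom_axioms_def hom_def
  using A.Add.is_group B.Add.is_group hom_add by auto

lemma group_hom_circ: "group_hom (circ_group A) (circ_group B) f"
  unfolding group_hom_def group_hom_axioms_def hom_def
  using A.Circ.is_group B.Circ.is_group hom_circ by auto

lemma hom_neg: "x \<in> bcarrier A \<Longrightarrow> f (bneg A x) = bneg B (f x)"
  using group_hom.hom_inv[OF group_hom_add] by simp

lemma hom_lam: "x \<in> bcarrier A \<Longrightarrow> y \<in> bcarrier A \<Longrightarrow> f (blambda A x y) = blambda B (f x) (f y)"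
  unfolding blambda_def by (simp add: hom_add hom_circ hom_neg)

lemma hom_star: "x \<in> bcarrier A \<Longrightarrow> y \<in> bcarrier A \<Longrightarrow> f (bstar A x y) = bstar B (f x) (f y)"
  unfolding bstar_def by (simp add: hom_add hom_circ hom_neg)

lemma image_vimage:
  assumes J: "J \<subseteq> bcarrier B"
  shows "f ` (bcarrier A \<inter> f -` J) = J"
proof
  show "J \<subseteq> f ` (bcarrier A \<inter> f -` J)"
  proof
    fix y assume y: "y \<in> J"
    then have "y \<in> f ` bcarrier A" using J by (auto simp: surj)
    then show "y \<in> f ` (bcarrier A \<inter> f -` J)" using y by blast
  qed
qed blast

lemma brace_ideal_vimage:
  assumes J: "brace_ideal B J"
  shows "brace_ideal A (bcarrier A \<inter> f -` J)"
proof -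
  have "bcarrier A \<inter> f -` J \<lhd> add_group A"
    using group_hom.normal_vimage[OF group_hom_add] J by (simp add: brace_ideal_def)
  moreover have "bcarrier A \<inter> f -` J \<lhd> circ_group A"
    using group_hom.normal_vimage[OF group_hom_circ] J by (simp add: brace_ideal_def)
  moreover have "blambda A x ` (bcarrier A \<inter> f -` J) \<subseteq> bcarrier A \<inter> f -` J"
    if "x \<in> bcarrier A" for x
    using that B.ideal_lam[OF J] by (auto simp: hom_lam)
  ultimately show ?thesis unfolding brace_ideal_def by blast
qed

lemma brace_ideal_image:
  assumes I: "brace_ideal A I"
  shows "brace_ideal B (f ` I)"
proof -
  have add: "I \<lhd> add_group A" and circ: "I \<lhd> circ_group A"
    using I by (simp_all add: brace_ideal_def)
  have "f ` I \<lhd> add_group B"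
    using normal.surj_hom_normal_subgroup[OF add group_hom_add] surj by simp
  moreover have "f ` I \<lhd> circ_group B"
    using normal.surj_hom_normal_subgroup[OF circ group_hom_circ] surj by simp
  moreover have "blambda B y ` f ` I \<subseteq> f ` I" if "y \<in> bcarrier B" for y
  proof
    fix z assume "z \<in> blambda B y ` f ` I"
    then obtain i where i: "i \<in> I" "z = blambda B y (f i)" by blast
    have "y \<in> f ` bcarrier A" using that surj by simp
    then obtain x where x: "x \<in> bcarrier A" "y = f x" by blast
    have "i \<in> bcarrier A" using A.ideal_subset[OF I] i(1) by blast
    then have "z = f (blambda A x i)" using i x by (simp add: hom_lam)
    then show "z \<in> f ` I" using A.ideal_lam[OF I x(1) i(1)] by blast
  qed
  ultimately show ?thesis unfolding brace_ideal_def by blast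
qed

lemma mem_ideal_of_image_mem:
  assumes I: "brace_ideal A I" and ker: "ker \<subseteq> I"
    and a: "a \<in> bcarrier A" and fa: "f a \<in> f ` I"
  shows "a \<in> I"
proof -
  obtain p where p: "p \<in> I" "f p = f a" using fa by auto
  have p_carr: "p \<in> bcarrier A" using A.ideal_subset[OF I] p(1) by blast
  have "badd A (bneg A p) a \<in> ker"
    using p p_carr a by (simp add: kernel_def hom_add hom_neg)
  then have "badd A p (badd A (bneg A p) a) \<in> I" using ker A.ideal_add[OF I p(1)] by blast
  then show ?thesis using p_carr a by simp
qed

lemma vimage_image_ideal:
  assumes I: "brace_ideal A I" and ker: "ker \<subseteq> I"
  shows "bcarrier A \<inter> f -` (f ` I) = I"
  using mem_ideal_of_image_mem[OF I ker] A.ideal_subset[OF I] by blast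

lemma prime_ideal_vimage:
  assumes Q: "prime_ideal B Q"
  shows "prime_ideal A (bcarrier A \<inter> f -` Q)"
proof (rule prime_idealI)
  have Q_ideal: "brace_ideal B Q" and Q_proper: "Q \<noteq> bcarrier B"
    using Q unfolding prime_ideal_def by blast+
  show "brace_ideal A (bcarrier A \<inter> f -` Q)" by (rule brace_ideal_vimage[OF Q_ideal])
  show "bcarrier A \<inter> f -` Q \<noteq> bcarrier A"
  proof
    assume "bcarrier A \<inter> f -` Q = bcarrier A"
    then have "f ` bcarrier A \<subseteq> Q" by blast
    then have "bcarrier B \<subseteq> Q" by (simp add: surj)
    then show False using Q_proper B.ideal_subset[OF Q_ideal] by blast
  qed
  fix X Y assume X: "X \<subseteq> bcarrier A" and Y: "Y \<subseteq> bcarrier A"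
    and XY: "\<And>x y. x \<in> X \<Longrightarrow> y \<in> Y \<Longrightarrow> bstar A x y \<in> bcarrier A \<inter> f -` Q"
  have "f ` X \<subseteq> Q \<or> f ` Y \<subseteq> Q"
  proof (rule prime_idealD[OF Q])
    show "f ` X \<subseteq> bcarrier B" "f ` Y \<subseteq> bcarrier B" using X Y by auto
    fix u v assume "u \<in> f ` X" "v \<in> f ` Y"
    then obtain x y where xy: "x \<in> X" "y \<in> Y" "u = f x" "v = f y" by blast
    moreover have "x \<in> bcarrier A" "y \<in> bcarrier A" using xy X Y by auto
    ultimately show "bstar B u v \<in> Q" using XY[of x y] by (simp add: hom_star)
  qed
  then show "X \<subseteq> bcarrier A \<inter> f -` Q \<or> Y \<subseteq> bcarrier A \<inter> f -` Q" using X Y by blast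
qed

lemma prime_ideal_image:
  assumes P: "prime_ideal A P" and ker: "ker \<subseteq> P"
  shows "prime_ideal B (f ` P)"
proof (rule prime_idealI)
  have P_ideal: "brace_ideal A P" and P_proper: "P \<noteq> bcarrier A"
    using P unfolding prime_ideal_def by blast+
  show "brace_ideal B (f ` P)" by (rule brace_ideal_image[OF P_ideal])
  show "f ` P \<noteq> bcarrier B"
  proof
    assume onto: "f ` P = bcarrier B"
    obtain a where a: "a \<in> bcarrier A" "a \<notin> P" using P_proper A.ideal_subset[OF P_ideal] by blast
    have "f a \<in> f ` P" using onto a(1) by simp
    then show False using mem_ideal_of_image_mem[OF P_ideal ker a(1)] a(2) by blast
  qed
  fix X Y assume X: "X \<subseteq> bcarrier B" and Y: "Y \<subseteq> bcarrier B"
    and XY: "\<And>u v. u \<in> X \<Longrightarrow> v \<in> Y \<Longrightarrow> bstar B u v \<in> f ` P"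
  have star_mem: "bstar A x y \<in> P" if "x \<in> bcarrier A \<inter> f -` X" "y \<in> bcarrier A \<inter> f -` Y" for x y
  proof -
    have "f (bstar A x y) \<in> f ` P" using that XY by (simp add: hom_star)
    then show ?thesis using that by (intro mem_ideal_of_image_mem[OF P_ideal ker]) simp_all
  qed
  have "bcarrier A \<inter> f -` X \<subseteq> P \<or> bcarrier A \<inter> f -` Y \<subseteq> P"
    by (rule prime_idealD[OF P]) (auto intro: star_mem)
  then show "X \<subseteq> f ` P \<or> Y \<subseteq> f ` P" using image_vimage[OF X] image_vimage[OF Y] by blast
qed

lemma kernel_subset_prime: "ker \<subseteq> Nil_brace A \<Longrightarrow> P \<in> Spec A \<Longrightarrow> ker \<subseteq> P"
  unfolding Nil_brace_def by blast

lemma subset_image_iff_vimage_subset: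
  assumes P: "brace_ideal A P" "ker \<subseteq> P" and J: "J \<subseteq> bcarrier B"
  shows "J \<subseteq> f ` P \<longleftrightarrow> bcarrier A \<inter> f -` J \<subseteq> P"
proof
  assume "J \<subseteq> f ` P"
  then have "bcarrier A \<inter> f -` J \<subseteq> bcarrier A \<inter> f -` (f ` P)" by blast
  then show "bcarrier A \<inter> f -` J \<subseteq> P" by (simp only: vimage_image_ideal[OF P])
next
  assume "bcarrier A \<inter> f -` J \<subseteq> P"
  then have "f ` (bcarrier A \<inter> f -` J) \<subseteq> f ` P" by (rule image_mono)
  then show "J \<subseteq> f ` P" by (simp only: image_vimage[OF J])
qed

lemma continuous_map_vimage:
  "continuous_map (spec_top B) (spec_top A) (\<lambda>Q. bcarrier A \<inter> f -` Q)"
  unfolding continuous_map_closedin A.topspace_spec_top B.topspace_spec_top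
proof (intro conjI allI impI)
  show "(\<lambda>Q. bcarrier A \<inter> f -` Q) \<in> Spec B \<rightarrow> Spec A"
    by (simp add: Pi_iff Spec_def prime_ideal_vimage)
  fix C assume "closedin (spec_top A) C"
  then obtain I where I: "brace_ideal A I" and C: "C = Hset A I"
    using A.closedin_spec_top by blast
  have "bcarrier A \<inter> f -` Q \<in> C \<longleftrightarrow> Q \<in> Hset B (f ` I)" if Q: "Q \<in> Spec B" for Q
  proof -
    have "bcarrier A \<inter> f -` Q \<in> Spec A" using Q by (simp add: Spec_def prime_ideal_vimage)
    moreover have "I \<subseteq> bcarrier A \<inter> f -` Q \<longleftrightarrow> f ` I \<subseteq> Q" using A.ideal_subset[OF I] by blast
    ultimately show ?thesis using Q unfolding C Hset_def by blast
  qed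
  then have "{Q \<in> Spec B. bcarrier A \<inter> f -` Q \<in> C} = Hset B (f ` I)"
    using Hset_subset_Spec by blast
  then show "closedin (spec_top B) {Q \<in> Spec B. bcarrier A \<inter> f -` Q \<in> C}"
    unfolding B.closedin_spec_top using brace_ideal_image[OF I] by blast
qed

lemma continuous_map_image:
  assumes ker: "ker \<subseteq> Nil_brace A"
  shows "continuous_map (spec_top A) (spec_top B) (\<lambda>P. f ` P)"
  unfolding continuous_map_closedin A.topspace_spec_top B.topspace_spec_top
proof (intro conjI allI impI)
  show "(\<lambda>P. f ` P) \<in> Spec A \<rightarrow> Spec B"
    by (simp add: Pi_iff Spec_def prime_ideal_image kernel_subset_prime[OF ker])
  fix C assume "closedin (spec_top B) C"
  then obtain J where J: "brace_ideal B J" and C: "C = Hset B J"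
    using B.closedin_spec_top by blast
  have "f ` P \<in> C \<longleftrightarrow> P \<in> Hset A (bcarrier A \<inter> f -` J)" if P: "P \<in> Spec A" for P
  proof -
    have "f ` P \<in> Spec B"
      using P by (simp add: Spec_def prime_ideal_image kernel_subset_prime[OF ker])
    moreover have "J \<subseteq> f ` P \<longleftrightarrow> bcarrier A \<inter> f -` J \<subseteq> P"
      by (rule subset_image_iff_vimage_subset[OF Spec_imp_brace_ideal[OF P]
            kernel_subset_prime[OF ker P] B.ideal_subset[OF J]])
    ultimately show ?thesis using P unfolding C Hset_def by blast
  qed
  then have "{P \<in> Spec A. f ` P \<in> C} = Hset A (bcarrier A \<inter> f -` J)"
    using Hset_subset_Spec by blast
  then show "closedin (spec_top A) {P \<in> Spec A. f ` P \<in> C}"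
    unfolding A.closedin_spec_top using brace_ideal_vimage[OF J] by blast
qed

theorem spec_top_homeomorphic:
  assumes ker: "ker \<subseteq> Nil_brace A"
  shows "spec_top A homeomorphic_space spec_top B"
  unfolding homeomorphic_space_def homeomorphic_maps_def A.topspace_spec_top B.topspace_spec_top
proof (intro exI conjI ballI)
  show "continuous_map (spec_top A) (spec_top B) (\<lambda>P. f ` P)"
    by (rule continuous_map_image[OF ker])
  show "continuous_map (spec_top B) (spec_top A) (\<lambda>Q. bcarrier A \<inter> f -` Q)"
    by (rule continuous_map_vimage)
  show "bcarrier A \<inter> f -` (f ` P) = P" if "P \<in> Spec A" for P
    by (rule vimage_image_ideal[OF Spec_imp_brace_ideal[OF that] kernel_subset_prime[OF ker that]])
  show "f ` (bcarrier A \<inter> f -` Q) = Q" if "Q \<in> Spec B" for Q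
    by (rule image_vimage[OF B.ideal_subset[OF Spec_imp_brace_ideal[OF that]]])
qed

end


section \<open>The quotient by an ideal\<close>

locale brace_quotient = skew_brace_loc +
  fixes N :: "'a set"
  assumes ideal_N: "brace_ideal A N"
begin

abbreviation "coset a \<equiv> bcoset A a N"

lemma coset_eq_iff:
  assumes a: "a \<in> carr" and b: "b \<in> carr"
  shows "coset a = coset b \<longleftrightarrow> neg a \<oplus> b \<in> N"
proof -
  interpret N: subgroup N "add_group A"
    using ideal_N by (simp add: brace_ideal_def normal_imp_subgroup)
  have coset: "coset x = rcong\<^bsub>add_group A\<^esub> N `` {x}" if "x \<in> carr" for x
  proof -
    have "coset x = x <#\<^bsub>add_group A\<^esub> N" by (auto simp: bcoset_def l_coset_def)
    also have "\<dots> = rcong\<^bsub>add_group A\<^esub> N `` {x}"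
      using N.l_coset_eq_rcong[OF Add.is_group] that by simp
    finally show ?thesis .
  qed
  show ?thesis
    using eq_equiv_class_iff[OF N.equiv_rcong[OF Add.is_group]] a b
    by (simp add: coset r_congruent_def)
qed

text \<open>Both group structures induce the same congruence modulo N, since
  -a + b = \<lambda>(a, a' \<circ> b) for the circle inverse a' of a, and N is \<lambda>-invariant.\<close>

lemma neg_add_mem_iff_cinv_circ_mem:
  assumes a: "a \<in> carr" and b: "b \<in> carr"
  shows "neg a \<oplus> b \<in> N \<longleftrightarrow> cinv a \<cdot> b \<in> N"
proof
  have eq: "neg a \<oplus> b = lam a (cinv a \<cdot> b)" using a b by (simp add: blambda_def)
  assume "neg a \<oplus> b \<in> N"
  then have "lam a (cinv a \<cdot> b) \<in> N" by (simp only: eq)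
  then have "lam (cinv a) (lam a (cinv a \<cdot> b)) \<in> N" by (rule ideal_lam[OF ideal_N cinv_closed[OF a]])
  then show "cinv a \<cdot> b \<in> N" using a b by (simp add: lam_cinv_lam)
next
  assume "cinv a \<cdot> b \<in> N"
  then have "lam a (cinv a \<cdot> b) \<in> N" by (rule ideal_lam[OF ideal_N a])
  then show "neg a \<oplus> b \<in> N" using a b by (simp add: blambda_def)
qed

lemma coset_add_cong:
  assumes "a \<in> carr" "a' \<in> carr" "b \<in> carr" "b' \<in> carr" "coset a = coset a'" "coset b = coset b'"
  shows "coset (a \<oplus> b) = coset (a' \<oplus> b')"
proof -
  have n1: "neg a \<oplus> a' \<in> N" and n2: "neg b \<oplus> b' \<in> N" using assms coset_eq_iff by auto
  have "neg (a \<oplus> b) \<oplus> (a' \<oplus> b') = neg b \<oplus> ((neg a \<oplus> a') \<oplus> neg (neg b)) \<oplus> (neg b \<oplus> b')"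
    using assms(1-4) by simp
  also have "\<dots> \<in> N"
    by (rule ideal_add[OF ideal_N ideal_add_conj[OF ideal_N neg_closed[OF assms(3)] n1] n2])
  finally show ?thesis using assms(1-4) coset_eq_iff by simp
qed

lemma coset_circ_cong:
  assumes "a \<in> carr" "a' \<in> carr" "b \<in> carr" "b' \<in> carr" "coset a = coset a'" "coset b = coset b'"
  shows "coset (a \<cdot> b) = coset (a' \<cdot> b')"
proof -
  have n1: "cinv a \<cdot> a' \<in> N" and n2: "cinv b \<cdot> b' \<in> N"
    using assms coset_eq_iff neg_add_mem_iff_cinv_circ_mem by auto
  have "cinv (a \<cdot> b) \<cdot> (a' \<cdot> b') = cinv b \<cdot> ((cinv a \<cdot> a') \<cdot> cinv (cinv b)) \<cdot> (cinv b \<cdot> b')"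
    using assms(1-4) by simp
  also have "\<dots> \<in> N"
    by (rule ideal_circ[OF ideal_N ideal_circ_conj[OF ideal_N cinv_closed[OF assms(3)] n1] n2])
  finally show ?thesis using assms(1-4) coset_eq_iff neg_add_mem_iff_cinv_circ_mem by simp
qed

lemma quotient_carrier: "bcarrier (quotient_brace A N) = coset ` carr"
  unfolding quotient_brace_def by auto

lemma quotient_add:
  assumes "a \<in> carr" "b \<in> carr"
  shows "badd (quotient_brace A N) (coset a) (coset b) = coset (a \<oplus> b)"
proof -
  have "{coset (a' \<oplus> b') | a' b'. a' \<in> carr \<and> b' \<in> carr \<and> coset a = coset a' \<and> coset b = coset b'}
      = {coset (a \<oplus> b)}"
    using assms coset_add_cong by blast
  then show ?thesis unfolding quotient_brace_def by simp
qed

lemma quotient_circ: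
  assumes "a \<in> carr" "b \<in> carr"
  shows "bcirc (quotient_brace A N) (coset a) (coset b) = coset (a \<cdot> b)"
proof -
  have "{coset (a' \<cdot> b') | a' b'. a' \<in> carr \<and> b' \<in> carr \<and> coset a = coset a' \<and> coset b = coset b'}
      = {coset (a \<cdot> b)}"
    using assms coset_circ_cong by blast
  then show ?thesis unfolding quotient_brace_def by simp
qed

lemma quotient_zero: "bzero (quotient_brace A N) = coset e"
  unfolding quotient_brace_def by simp

lemma skew_brace_quotient: "skew_brace (quotient_brace A N)"
  by (rule skew_brace_image[OF is_skew_brace quotient_carrier])
    (simp_all add: quotient_add quotient_circ quotient_zero)

lemma surj_brace_hom_coset: "surj_brace_hom A (quotient_brace A N) coset"
  unfolding surj_brace_hom_def surj_brace_hom_axioms_def skew_brace_loc_def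
  using is_skew_brace skew_brace_quotient quotient_carrier quotient_add quotient_circ by simp

lemma kernel_coset: "kernel (add_group A) (add_group (quotient_brace A N)) coset = N"
proof -
  have "coset a = coset e \<longleftrightarrow> a \<in> N" if "a \<in> carr" for a
    using coset_eq_iff[OF e_closed that] that by (simp add: eq_commute[of "coset a"])
  then show ?thesis using ideal_subset[OF ideal_N] by (auto simp: kernel_def quotient_zero)
qed

end

theorem corollary4p17:
  fixes A :: "'a brace"
  assumes "skew_brace A"
  shows "spec_top A homeomorphic_space spec_top (quotient_brace A (Nil_brace A))"
proof -
  interpret skew_brace_loc A by (rule skew_brace_loc.intro) fact
  interpret brace_quotient A "Nil_brace A" by unfold_locales (rule brace_ideal_Nil)
  interpret surj_brace_hom A "quotient_brace A (Nil_brace A)" coset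
    by (rule surj_brace_hom_coset)
  show ?thesis by (rule spec_top_homeomorphic) (simp add: kernel_coset)
qed

end
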